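(* Let $V\subset H$ be real separable Hilbert spaces with $H$ identified with its dual, let $A\in\mathcal L(V,V')$ be symmetric such that $(y,z)\mapsto\langle Ay,z\rangle_{V',V}$ is a complete scalar product on $V$ (with which $V$ is endowed), with $V\subseteq H$ dense, continuous and compact, and let $A_{\rm rc}(t)\in\mathcal L(H,V')$ for a.e. $t>0$ with $\|A_{\rm rc}\|_{L^\infty(\mathbb R_+,\mathcal L(H,V'))}<+\infty$. Suppose there exist $M\in\mathbb N_+$, $T>0$, $\theta\in(0,1)$, a linearly independent family $\{\Phi_j\mid 1\le j\le M\}\subset\mathrm D(A)'$ with $\|\Phi_j\|_{\mathrm D(A)'}=1$, and maps $v_k\in\mathcal L(V',L^\infty(I_k^T,\mathbb R^M))$, $k\in\mathbb N$, with $\sup_k\|v_k\|_{\mathcal L(V',L^\infty(I_k^T,\mathbb R^M))}\le\mathfrak K$, such that for all $k\in\mathbb N$ and $\mathfrak v\in V'$ the solution of $\dot y+Ay+A_{\rm rc}(t)y=\sum_{j=1}^M (v_{k,j}(\mathfrak v))(t)\Phi_j$, $t\in I_k^T$, $y(kT)=\mathfrak v$, satisfies $\|y(kT+T)\|_{V'}\le\theta\|\mathfrak v\|_{V'}$. Define $\widehat v_k(\mathfrak w)\coloneqq v_k(A\mathfrak w)$ for $\mathfrak w\in V$ and $A_{\rm rc}^A\coloneqq A^{-1}A_{\rm rc}A$. Then: (i) the family $\{A^{-1}\Phi_j\mid 1\le j\le M\}$ is linearly independent and contained in the unit sphere of $H$; (ii) $\widehat v_k\in\mathcal L(V,L^\infty(I_k^T,\mathbb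 R^M))$ and $\sup_{k\in\mathbb N}\|\widehat v_k\|_{\mathcal L(V,L^\infty(I_k^T,\mathbb R^M))}\le\mathfrak K$; (iii) for all $k\in\mathbb N$ and all $\mathfrak w\in V$, the solution of $$\dot w+Aw+A_{\rm rc}^Aw=\sum_{j=1}^M(\widehat v_{k,j}(\mathfrak w))A^{-1}\Phi_j,\qquad w(kT)=\mathfrak w,\qquad t\in I_k^T,$$ satisfies $\|w(kT+T)\|_V\le\theta\|\mathfrak w\|_V$.
   Context: $I_k^T=(kT,kT+T)$. $\mathrm D(A)=\{y\in H\mid Ay\in H\}$ with norm $\|Ay\|_H$, $\mathrm D(A)'$ its dual (with $H\subset V'\subset\mathrm D(A)'$); $V$ has norm $\langle Ay,y\rangle^{1/2}$, so $A\colon V\to V'$ and $A\colon H\to\mathrm D(A)'$ are isometries. $\mathbb N$ includes $0$, $\mathbb N_+=\mathbb N\setminus\{0\}$. *)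

theory Defs
  imports "HOL-Analysis.Analysis"
begin

(* V is the type 'v with its inner product, H is the type 'h, the inclusion
  V \<subseteq> H is the map \<iota>. V' is the dual of V, realised as 'v \<Rightarrow>_L real (operator norm).
  H is identified with its dual and embedded in V' by embH. *)

definition compact_emb :: "('v::real_normed_vector \<Rightarrow> 'h::real_normed_vector) \<Rightarrow> bool" where
  "compact_emb \<iota> \<longleftrightarrow> (\<forall>B. bounded B \<longrightarrow> compact (closure (\<iota> ` B)))"

definition embH :: "('v::real_inner \<Rightarrow> 'h::real_inner) \<Rightarrow> 'h \<Rightarrow> ('v \<Rightarrow>\<^sub>L real)" where
  "embH \<iota> h = Blinfun (\<lambda>z. inner h (\<iota> z))"

definition domA :: "('v::real_inner \<Rightarrow> ('v \<Rightarrow>\<^sub>L real)) \<Rightarrow> ('v \<Rightarrow> 'h::real_inner) \<Rightarrow> 'v set" where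
  "domA A \<iota> = {y. \<exists>h. A y = embH \<iota> h}"

definition AH :: "('v::real_inner \<Rightarrow> ('v \<Rightarrow>\<^sub>L real)) \<Rightarrow> ('v \<Rightarrow> 'h::real_inner) \<Rightarrow> 'v \<Rightarrow> 'h" where
  "AH A \<iota> y = (THE h. A y = embH \<iota> h)"

(* D(A)': bounded linear functionals on D(A) (normed by |Ay|_H); only values on D(A) matter. *)
definition in_DAdual :: "('v::real_inner \<Rightarrow> ('v \<Rightarrow>\<^sub>L real)) \<Rightarrow> ('v \<Rightarrow> 'h::real_inner) \<Rightarrow> ('v \<Rightarrow> real) \<Rightarrow> bool" where
  "in_DAdual A \<iota> \<Phi> \<longleftrightarrow>
     (\<forall>a b x y. x \<in> domA A \<iota> \<longrightarrow> y \<in> domA A \<iota> \<longrightarrow> \<Phi> (a *\<^sub>R x + b *\<^sub>R y) = a * \<Phi> x + b * \<Phi> y)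
     \<and> (\<exists>C. \<forall>y \<in> domA A \<iota>. \<bar>\<Phi> y\<bar> \<le> C * norm (AH A \<iota> y))"

definition DAdual_norm :: "('v::real_inner \<Rightarrow> ('v \<Rightarrow>\<^sub>L real)) \<Rightarrow> ('v \<Rightarrow> 'h::real_inner) \<Rightarrow> ('v \<Rightarrow> real) \<Rightarrow> real" where
  "DAdual_norm A \<iota> \<Phi> = Sup {\<bar>\<Phi> y\<bar> | y. y \<in> domA A \<iota> \<and> norm (AH A \<iota> y) \<le> 1}"

(* A^{-1} : D(A)' \<rightarrow> H  (A extended to H \<rightarrow> D(A)' acts by \<langle>Ah,\<psi>\<rangle> = (h, A\<psi>)_H). *)
definition Ainv_DAd :: "('v::real_inner \<Rightarrow> ('v \<Rightarrow>\<^sub>L real)) \<Rightarrow> ('v \<Rightarrow> 'h::real_inner) \<Rightarrow> ('v \<Rightarrow> real) \<Rightarrow> 'h" where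
  "Ainv_DAd A \<iota> \<Phi> = (THE h. \<forall>\<psi> \<in> domA A \<iota>. inner h (AH A \<iota> \<psi>) = \<Phi> \<psi>)"

definition Ainv_Vd :: "('v \<Rightarrow> ('v \<Rightarrow>\<^sub>L real)) \<Rightarrow> ('v \<Rightarrow>\<^sub>L real) \<Rightarrow> 'v" where
  "Ainv_Vd A f = (THE v. A v = f)"

definition ArcA :: "('v::real_inner \<Rightarrow> ('v \<Rightarrow>\<^sub>L real)) \<Rightarrow> ('v \<Rightarrow> 'h::real_inner)
    \<Rightarrow> (real \<Rightarrow> ('h \<Rightarrow>\<^sub>L ('v \<Rightarrow>\<^sub>L real))) \<Rightarrow> real \<Rightarrow> 'v \<Rightarrow> 'v" where
  "ArcA A \<iota> Arc t w = Ainv_Vd A (blinfun_apply (Arc t) (AH A \<iota> w))"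

definition Ik :: "real \<Rightarrow> nat \<Rightarrow> real set" where
  "Ik T k = {real k * T <..< real k * T + T}"

(* v \<in> L(X, L^\<infinity>(I, R^M)) (values a.e. defined, Euclidean norm on R^M). *)
definition Linf_blin :: "real set \<Rightarrow> ('x::real_normed_vector \<Rightarrow> real \<Rightarrow> real^'m::finite) \<Rightarrow> bool" where
  "Linf_blin I v \<longleftrightarrow>
     (\<forall>f. v f \<in> borel_measurable (lebesgue_on I))
     \<and> (\<forall>a b f g. AE t in lebesgue_on I. v (a *\<^sub>R f + b *\<^sub>R g) t = a *\<^sub>R v f t + b *\<^sub>R v g t)
     \<and> (\<exists>C. \<forall>f. AE t in lebesgue_on I. norm (v f t) \<le> C * norm f)"

definition Linf_opnorm_le :: "real set \<Rightarrow> ('x::real_normed_vector \<Rightarrow> real \<Rightarrow> real^'m::finite) \<Rightarrow> real \<Rightarrow> bool" where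
  "Linf_opnorm_le I v K \<longleftrightarrow> (\<forall>f. AE t in lebesgue_on I. norm (v f t) \<le> K * norm f)"

(* Weak solution on [a,b] of  y' + Ay + B(t)y = \<Sum>_j u_j(t) \<Phi>_j  in D(A)', y(a) = y0 \<in> V':
  y \<in> C([a,b],V') \<inter> L^2((a,b),H), tested against \<psi> \<in> D(A). *)
definition sol_Vd :: "('v::real_inner \<Rightarrow> ('v \<Rightarrow>\<^sub>L real)) \<Rightarrow> ('v \<Rightarrow> 'h::real_inner)
    \<Rightarrow> (real \<Rightarrow> ('h \<Rightarrow>\<^sub>L ('v \<Rightarrow>\<^sub>L real))) \<Rightarrow> ('m::finite \<Rightarrow> 'v \<Rightarrow> real)
    \<Rightarrow> real \<Rightarrow> real \<Rightarrow> (real \<Rightarrow> real^'m) \<Rightarrow> ('v \<Rightarrow>\<^sub>L real) \<Rightarrow> (real \<Rightarrow> ('v \<Rightarrow>\<^sub>L real)) \<Rightarrow> bool" where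
  "sol_Vd A \<iota> B \<Phi> a b u y0 y \<longleftrightarrow>
     continuous_on {a..b} y \<and> y a = y0 \<and>
     (\<exists>yh :: real \<Rightarrow> 'h.
        yh \<in> borel_measurable (lebesgue_on {a<..<b})
      \<and> integrable (lebesgue_on {a<..<b}) (\<lambda>t. (norm (yh t))\<^sup>2)
      \<and> (AE t in lebesgue_on {a<..<b}. y t = embH \<iota> (yh t))
      \<and> (\<forall>\<psi> \<in> domA A \<iota>. \<forall>t \<in> {a..b}.
           let g = (\<lambda>s. - inner (yh s) (AH A \<iota> \<psi>) - blinfun_apply (blinfun_apply (B s) (yh s)) \<psi>
                        + (\<Sum>j\<in>UNIV. u s $ j * \<Phi> j \<psi>))
           in set_integrable lebesgue {a..t} g
              \<and> blinfun_apply (y t) \<psi> - blinfun_apply (y a) \<psi> = (LINT s:{a..t}|lebesgue. g s)))"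

(* Weak solution on [a,b] of  w' + Aw + B(t)w = \<Sum>_j u_j(t) G_j  in H, w(a) = w0 \<in> V:
  w \<in> C([a,b],V), w \<in> L^2((a,b),D(A)), tested against \<psi> \<in> H. *)
definition sol_V :: "('v::real_inner \<Rightarrow> ('v \<Rightarrow>\<^sub>L real)) \<Rightarrow> ('v \<Rightarrow> 'h::real_inner)
    \<Rightarrow> (real \<Rightarrow> 'v \<Rightarrow> 'v) \<Rightarrow> ('m::finite \<Rightarrow> 'h)
    \<Rightarrow> real \<Rightarrow> real \<Rightarrow> (real \<Rightarrow> real^'m) \<Rightarrow> 'v \<Rightarrow> (real \<Rightarrow> 'v) \<Rightarrow> bool" where
  "sol_V A \<iota> B G a b u w0 w \<longleftrightarrow>
     continuous_on {a..b} w \<and> w a = w0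
     \<and> (AE t in lebesgue_on {a<..<b}. w t \<in> domA A \<iota>)
     \<and> (\<lambda>t. AH A \<iota> (w t)) \<in> borel_measurable (lebesgue_on {a<..<b})
     \<and> integrable (lebesgue_on {a<..<b}) (\<lambda>t. (norm (AH A \<iota> (w t)))\<^sup>2)
     \<and> (\<forall>\<psi>. \<forall>t \<in> {a..b}.
          let g = (\<lambda>s. - inner (AH A \<iota> (w s)) \<psi> - inner (\<iota> (B s (w s))) \<psi>
                       + (\<Sum>j\<in>UNIV. u s $ j * inner (G j) \<psi>))
          in set_integrable lebesgue {a..t} g
             \<and> inner (\<iota> (w t)) \<psi> - inner (\<iota> (w a)) \<psi> = (LINT s:{a..t}|lebesgue. g s))"

end

(*
  The corollary is the change of variables w = A\<^sup>-\<^sup>1 y. Here A is the Riesz isometry V \<rightarrow> V', and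
  its restriction A : D(A) \<rightarrow> H is a bijection, isometric for the graph norm of D(A). Testing the
  equation for w against A\<psi> \<in> H, \<psi> \<in> D(A), therefore gives exactly the weak V'-equation for y = A w,
  so the decay of y transfers to w. The same bijection makes A\<^sup>-\<^sup>1\<Phi>\<^sub>j the Riesz representative in H
  of \<Phi>\<^sub>j \<circ> A\<^sup>-\<^sup>1, whence (i); (ii) holds because A is a linear isometry.
  The one analytic ingredient is the Riesz representation theorem in a real Hilbert space, proved
  via the point of minimal norm on the hyperplane {f = 1}.
*)

theory Submission
  imports Defs
begin

lemma Cauchy_if_dist_sq_le:
  fixes X :: "nat \<Rightarrow> 'a::metric_space"
  assumes dist_le: "\<And>m n. (dist (X m) (X n))\<^sup>2 \<le> e m + e n" and e: "e \<longlonglongrightarrow> 0"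
  shows "Cauchy X"
proof (rule metric_CauchyI)
  fix r :: real assume r: "0 < r"
  then have "\<forall>\<^sub>F n in sequentially. e n < r\<^sup>2 / 2"
    using e by (intro order_tendstoD(2)) auto
  then obtain N where N: "\<And>n. n \<ge> N \<Longrightarrow> e n < r\<^sup>2 / 2"
    by (auto simp: eventually_sequentially)
  have "dist (X m) (X n) < r" if "m \<ge> N" "n \<ge> N" for m n
  proof -
    have "(dist (X m) (X n))\<^sup>2 < r\<^sup>2"
      using dist_le[of m n] N[OF that(1)] N[OF that(2)] by linarith
    then show ?thesis using r by (simp add: power_less_imp_less_base)
  qed
  then show "\<exists>N. \<forall>m\<ge>N. \<forall>n\<ge>N. dist (X m) (X n) < r" by blast
qed

lemma closed_convex_has_min_norm:
  fixes S :: "'a::{real_inner,complete_space} set"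
  assumes "closed S" and "convex S" and "S \<noteq> {}"
  obtains z where "z \<in> S" and "\<And>x. x \<in> S \<Longrightarrow> norm z \<le> norm x"
proof -
  define d where "d = Inf (norm ` S)"
  have bdd: "bdd_below (norm ` S)" by (auto intro: bdd_belowI[where m = 0])
  have d_le: "d \<le> norm x" if "x \<in> S" for x
    unfolding d_def using bdd that by (simp add: cInf_lower)
  have "d \<in> closure (norm ` S)"
    unfolding d_def using assms(3) bdd by (intro closure_contains_Inf) auto
  then obtain r where r: "\<And>n. r n \<in> norm ` S" and "r \<longlonglongrightarrow> d"
    by (auto simp: closure_sequential)
  from r have "\<forall>n. \<exists>x\<in>S. r n = norm x" by blast
  then obtain xs where xs: "\<And>n. xs n \<in> S" and norm_xs: "\<And>n. norm (xs n) = r n" by metis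
  have lim_norm: "(\<lambda>n. norm (xs n)) \<longlonglongrightarrow> d" using \<open>r \<longlonglongrightarrow> d\<close> by (simp add: norm_xs)
  have d_nonneg: "0 \<le> d"
    unfolding d_def using assms(3) by (intro cInf_greatest) auto
  \<comment> \<open>parallelogram law, with the midpoint of two points of S again in S\<close>
  define e where "e n = 2 * ((norm (xs n))\<^sup>2 - d\<^sup>2)" for n
  have "(norm (xs m - xs n))\<^sup>2 \<le> e m + e n" for m n
  proof -
    have "(1/2) *\<^sub>R xs m + (1/2) *\<^sub>R xs n \<in> S"
      using xs by (intro convexD[OF assms(2)]) auto
    from d_le[OF this] have "2 * d \<le> norm (xs m + xs n)"
      by (simp add: scaleR_add_right[symmetric])
    then have "4 * d\<^sup>2 \<le> (norm (xs m + xs n))\<^sup>2"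
      using power_mono[of "2 * d" _ 2] d_nonneg by (simp add: power_mult_distrib)
    moreover have "(norm (xs m - xs n))\<^sup>2 + (norm (xs m + xs n))\<^sup>2
        = 2 * (norm (xs m))\<^sup>2 + 2 * (norm (xs n))\<^sup>2"
      by (simp add: power2_norm_eq_inner inner_add_left inner_add_right
          inner_diff_left inner_diff_right inner_commute)
    ultimately show ?thesis unfolding e_def right_diff_distrib by linarith
  qed
  moreover have "(\<lambda>n. (norm (xs n))\<^sup>2 - d\<^sup>2) \<longlonglongrightarrow> 0"
    using tendsto_diff[OF tendsto_power[OF lim_norm, of 2] tendsto_const[of "d\<^sup>2"]] by simp
  then have "e \<longlonglongrightarrow> 0"
    unfolding e_def by (rule tendsto_mult_right_zero)
  ultimately have "Cauchy xs"
    by (intro Cauchy_if_dist_sq_le[where e = e]) (simp_all add: dist_norm)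
  then obtain z where lim: "xs \<longlonglongrightarrow> z" using Cauchy_convergent_iff convergent_def by blast
  have "z \<in> S" using closed_sequentially[OF assms(1) xs lim] .
  moreover have "norm z = d" using LIMSEQ_unique[OF tendsto_norm[OF lim] lim_norm] .
  ultimately show thesis using that d_le by auto
qed

lemma inner_eq_zero_if_norm_le_on_line:
  fixes z k :: "'a::real_inner"
  assumes min: "\<And>t. norm z \<le> norm (z + t *\<^sub>R k)"
  shows "inner z k = 0"
proof (cases "k = 0")
  case False
  define c where "c = inner z k"
  define q where "q = inner k k"
  have q: "0 < q" using False unfolding q_def by simp
  have expand: "(norm (z + t *\<^sub>R k))\<^sup>2 = (norm z)\<^sup>2 + 2 * t * c + t * t * q" for t
    unfolding c_def q_def
    by (simp add: power2_norm_eq_inner inner_add_left inner_add_right inner_commute algebra_simps)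
  have "(norm z)\<^sup>2 \<le> (norm (z + (- c / q) *\<^sub>R k))\<^sup>2"
    using min[of "- c / q"] by (intro power_mono) auto
  also have "\<dots> = (norm z)\<^sup>2 - c\<^sup>2 / q"
    unfolding expand using q by (simp add: field_simps power2_eq_square)
  finally have "c\<^sup>2 / q \<le> 0" by simp
  then show ?thesis using q unfolding c_def by (simp add: divide_le_0_iff)
qed simp

lemma riesz_representation:
  fixes f :: "'a::{real_inner,complete_space} \<Rightarrow> real"
  assumes "bounded_linear f"
  shows "\<exists>h. \<forall>x. f x = inner h x"
proof (cases "\<forall>x. f x = 0")
  case True
  then show ?thesis by (intro exI[of _ 0]) simp
next
  case False
  interpret f: bounded_linear f by fact
  from False obtain e where e: "f e \<noteq> 0" by auto
  define S where "S = {x. f x = 1}"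
  have "closed S" unfolding S_def
    by (intro closed_Collect_eq f.continuous_on continuous_on_const continuous_on_id)
  moreover have "convex S" unfolding S_def convex_def by (simp add: f.add f.scale)
  moreover have "(1 / f e) *\<^sub>R e \<in> S" using e by (simp add: S_def f.scale)
  ultimately obtain z where z: "z \<in> S" and min: "\<And>x. x \<in> S \<Longrightarrow> norm z \<le> norm x"
    using closed_convex_has_min_norm by blast
  have orth: "inner z k = 0" if "f k = 0" for k
    using z that by (intro inner_eq_zero_if_norm_le_on_line min) (simp add: S_def f.add f.scale)
  have fz: "f z = 1" using z by (simp add: S_def)
  have "f x = inner ((1 / inner z z) *\<^sub>R z) x" for x
  proof -
    have "inner z (x - f x *\<^sub>R z) = 0" using fz by (intro orth) (simp add: f.diff f.scale)
    then show ?thesis using fz by (auto simp: inner_diff_right)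
  qed
  then show ?thesis by blast
qed

lemma embH_apply:
  assumes "bounded_linear \<iota>"
  shows "blinfun_apply (embH \<iota> h) z = inner h (\<iota> z)"
proof -
  have "bounded_linear (\<lambda>z. inner h (\<iota> z))"
    using bounded_linear_compose[OF bounded_linear_inner_right assms] by (simp add: o_def)
  then show ?thesis unfolding embH_def by (simp add: bounded_linear_Blinfun_apply)
qed

lemma Linf_blin_compose_isometry:
  assumes "linear L" and "\<And>x. norm (L x) = norm x" and "Linf_blin I v"
  shows "Linf_blin I (\<lambda>x. v (L x))"
proof -
  from assms(3) obtain C where
      meas: "\<And>f. v f \<in> borel_measurable (lebesgue_on I)"
    and lin: "\<And>a b f g. AE t in lebesgue_on I. v (a *\<^sub>R f + b *\<^sub>R g) t = a *\<^sub>R v f t + b *\<^sub>R v g t"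
    and bound: "\<And>f. AE t in lebesgue_on I. norm (v f t) \<le> C * norm f"
    unfolding Linf_blin_def by blast
  show ?thesis
    unfolding Linf_blin_def linear_add[OF assms(1)] linear_scale[OF assms(1)]
    using meas lin bound[of "L f" for f] by (auto simp: assms(2))
qed

lemma Linf_opnorm_le_compose_isometry:
  assumes "\<And>x. norm (L x) = norm x" and "Linf_opnorm_le I v K"
  shows "Linf_opnorm_le I (\<lambda>x. v (L x)) K"
  using assms(2) unfolding Linf_opnorm_le_def by (metis assms(1))

locale gelfand_triple =
  fixes \<iota> :: "'v::{real_inner,complete_space} \<Rightarrow> 'h::{real_inner,complete_space}"
    and A :: "'v \<Rightarrow> ('v \<Rightarrow>\<^sub>L real)"
  assumes A_apply: "\<And>y z. blinfun_apply (A y) z = inner y z"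
    and bounded_linear_emb: "bounded_linear \<iota>"
    and dense_emb: "closure (range \<iota>) = UNIV"
begin

lemma A_eq_blinfun_inner_right: "A = blinfun_inner_right"
  by (intro ext blinfun_eqI) (simp add: A_apply)

lemma bounded_linear_A: "bounded_linear A"
  unfolding A_eq_blinfun_inner_right by (rule bounded_linear_blinfun_inner_right)

lemmas linear_A = bounded_linear.linear[OF bounded_linear_A]

lemma norm_A [simp]: "norm (A x) = norm x"
proof (rule antisym)
  show "norm (A x) \<le> norm x"
    by (rule norm_blinfun_bound) (simp_all add: A_apply Cauchy_Schwarz_ineq2)
  have "norm x * norm x = blinfun_apply (A x) x"
    by (simp add: A_apply power2_eq_square[symmetric] power2_norm_eq_inner)
  also have "\<dots> \<le> norm (A x) * norm x"
    using norm_blinfun[of "A x" x] by simp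
  finally show "norm x \<le> norm (A x)"
    by (cases "x = 0") (auto simp: mult_le_cancel_right)
qed

lemma inj_A: "inj A"
proof (rule injI)
  fix x y assume "A x = A y"
  then have "\<forall>z. inner x z = inner y z" by (metis A_apply)
  then show "x = y" by (simp add: vector_eq_rdot)
qed

lemma A_Ainv_Vd [simp]: "A (Ainv_Vd A F) = F"
proof -
  obtain h where "\<forall>x. blinfun_apply F x = inner h x"
    using riesz_representation[OF blinfun.bounded_linear_right] by blast
  then have "A h = F" by (intro blinfun_eqI) (simp add: A_apply)
  then have "\<exists>!x. A x = F" using inj_A by (auto dest: injD)
  then show ?thesis unfolding Ainv_Vd_def by (rule theI')
qed

lemma Ainv_Vd_A [simp]: "Ainv_Vd A (A x) = x"
  by (rule injD[OF inj_A]) simp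

lemma linear_embH: "linear (embH \<iota>)"
  by (rule linearI; rule blinfun_eqI)
    (simp_all add: embH_apply[OF bounded_linear_emb] inner_add_left plus_blinfun.rep_eq scaleR_blinfun.rep_eq)

lemma embH_inj:
  assumes "embH \<iota> h1 = embH \<iota> h2"
  shows "h1 = h2"
proof -
  have "range \<iota> \<subseteq> {x. inner (h1 - h2) x = 0}"
    using arg_cong[OF assms, of "\<lambda>f. blinfun_apply f z" for z]
    by (auto simp: embH_apply[OF bounded_linear_emb] inner_diff_left)
  then have "closure (range \<iota>) \<subseteq> {x. inner (h1 - h2) x = 0}"
    by (intro closure_minimal closed_Collect_eq continuous_intros)
  then have "h1 - h2 \<in> {x. inner (h1 - h2) x = 0}" using dense_emb by blast
  then show ?thesis by simp
qed

lemma A_eq_embH_AH: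
  assumes "y \<in> domA A \<iota>"
  shows "A y = embH \<iota> (AH A \<iota> y)"
proof -
  obtain h where "A y = embH \<iota> h" using assms unfolding domA_def by blast
  then have "\<exists>!h. A y = embH \<iota> h" by (auto intro: embH_inj)
  then show ?thesis unfolding AH_def by (rule theI')
qed

lemma inner_AH:
  assumes "\<psi> \<in> domA A \<iota>"
  shows "inner (AH A \<iota> \<psi>) (\<iota> x) = inner \<psi> x"
  using arg_cong[OF A_eq_embH_AH[OF assms], of "\<lambda>f. blinfun_apply f x"]
  by (simp add: A_apply embH_apply[OF bounded_linear_emb])

definition Ainv_H :: "'h \<Rightarrow> 'v" where
  "Ainv_H h = Ainv_Vd A (embH \<iota> h)"

lemma Ainv_H_in_domA: "Ainv_H h \<in> domA A \<iota>"
  unfolding Ainv_H_def domA_def by auto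

lemma A_Ainv_H: "A (Ainv_H h) = embH \<iota> h"
  by (simp add: Ainv_H_def)

lemma AH_Ainv_H [simp]: "AH A \<iota> (Ainv_H h) = h"
  using A_eq_embH_AH[OF Ainv_H_in_domA, of h] A_Ainv_H[of h] by (metis embH_inj)

lemma Ainv_H_AH:
  assumes "\<psi> \<in> domA A \<iota>"
  shows "Ainv_H (AH A \<iota> \<psi>) = \<psi>"
  unfolding Ainv_H_def A_eq_embH_AH[OF assms, symmetric] by simp

lemma linear_Ainv_H: "linear Ainv_H"
proof
  show "Ainv_H (x + y) = Ainv_H x + Ainv_H y" for x y
    by (rule injD[OF inj_A]) (simp add: A_Ainv_H linear_add[OF linear_embH] linear_add[OF linear_A])
  show "Ainv_H (r *\<^sub>R x) = r *\<^sub>R Ainv_H x" for r x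
    by (rule injD[OF inj_A]) (simp add: A_Ainv_H linear_scale[OF linear_embH] linear_scale[OF linear_A])
qed

lemma Ainv_DAd_eqI:
  assumes "\<forall>\<psi>\<in>domA A \<iota>. inner h (AH A \<iota> \<psi>) = \<Phi> \<psi>"
  shows "Ainv_DAd A \<iota> \<Phi> = h"
  unfolding Ainv_DAd_def
proof (rule the_equality)
  fix h' assume h': "\<forall>\<psi>\<in>domA A \<iota>. inner h' (AH A \<iota> \<psi>) = \<Phi> \<psi>"
  have "inner h' x = inner h x" for x
    using h' assms Ainv_H_in_domA[of x] by (metis AH_Ainv_H)
  then show "h' = h" using vector_eq_rdot by blast
qed fact

lemma bounded_linear_comp_Ainv_H:
  assumes "in_DAdual A \<iota> \<Phi>"
  shows "bounded_linear (\<lambda>h. \<Phi> (Ainv_H h))"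
proof -
  from assms obtain C where
      lin: "\<And>a b x y. x \<in> domA A \<iota> \<Longrightarrow> y \<in> domA A \<iota> \<Longrightarrow> \<Phi> (a *\<^sub>R x + b *\<^sub>R y) = a * \<Phi> x + b * \<Phi> y"
    and bound: "\<And>y. y \<in> domA A \<iota> \<Longrightarrow> \<bar>\<Phi> y\<bar> \<le> C * norm (AH A \<iota> y)"
    unfolding in_DAdual_def by blast
  show ?thesis
  proof (rule bounded_linear_intro[where K = C])
    show "\<Phi> (Ainv_H (x + y)) = \<Phi> (Ainv_H x) + \<Phi> (Ainv_H y)" for x y
      using lin[OF Ainv_H_in_domA Ainv_H_in_domA, of 1 x 1 y] by (simp add: linear_add[OF linear_Ainv_H])
    show "\<Phi> (Ainv_H (r *\<^sub>R x)) = r *\<^sub>R \<Phi> (Ainv_H x)" for r x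
      using lin[OF Ainv_H_in_domA Ainv_H_in_domA, of r x 0 x] by (simp add: linear_scale[OF linear_Ainv_H])
    show "norm (\<Phi> (Ainv_H x)) \<le> norm x * C" for x
      using bound[OF Ainv_H_in_domA, of x] by (simp add: mult.commute)
  qed
qed

lemma inner_Ainv_DAd_AH:
  assumes "in_DAdual A \<iota> \<Phi>" and "\<psi> \<in> domA A \<iota>"
  shows "inner (Ainv_DAd A \<iota> \<Phi>) (AH A \<iota> \<psi>) = \<Phi> \<psi>"
proof -
  obtain h where "\<forall>x. \<Phi> (Ainv_H x) = inner h x"
    using riesz_representation[OF bounded_linear_comp_Ainv_H[OF assms(1)]] by blast
  then have "\<forall>\<psi>\<in>domA A \<iota>. inner h (AH A \<iota> \<psi>) = \<Phi> \<psi>" by (metis Ainv_H_AH)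
  then show ?thesis using assms(2) by (simp add: Ainv_DAd_eqI)
qed

lemma norm_Ainv_DAd:
  assumes "in_DAdual A \<iota> \<Phi>"
  shows "norm (Ainv_DAd A \<iota> \<Phi>) = DAdual_norm A \<iota> \<Phi>"
  unfolding DAdual_norm_def
proof (rule cSup_eq_maximum[symmetric])
  let ?h = "Ainv_DAd A \<iota> \<Phi>"
  have "inner ?h (sgn ?h) = norm ?h"
    by (cases "?h = 0") (auto simp: sgn_div_norm power2_norm_eq_inner[symmetric] power2_eq_square)
  then have "\<bar>\<Phi> (Ainv_H (sgn ?h))\<bar> = norm ?h"
    using inner_Ainv_DAd_AH[OF assms Ainv_H_in_domA] by simp
  then show "norm ?h \<in> {\<bar>\<Phi> y\<bar> | y. y \<in> domA A \<iota> \<and> norm (AH A \<iota> y) \<le> 1}"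
    using Ainv_H_in_domA norm_sgn[of ?h] by (intro CollectI exI[of _ "Ainv_H (sgn ?h)"]) auto
  fix x assume "x \<in> {\<bar>\<Phi> y\<bar> | y. y \<in> domA A \<iota> \<and> norm (AH A \<iota> y) \<le> 1}"
  then obtain y where y: "y \<in> domA A \<iota>" "norm (AH A \<iota> y) \<le> 1" and x: "x = \<bar>inner ?h (AH A \<iota> y)\<bar>"
    using inner_Ainv_DAd_AH[OF assms] by auto
  have "x \<le> norm ?h * norm (AH A \<iota> y)" unfolding x by (rule Cauchy_Schwarz_ineq2)
  also have "\<dots> \<le> norm ?h" using y(2) by (simp add: mult_left_le)
  finally show "x \<le> norm ?h" .
qed

lemma Ainv_DAd_linear_independent:
  assumes "\<forall>j. in_DAdual A \<iota> (\<Phi> j)"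
    and "\<forall>c. (\<forall>\<psi> \<in> domA A \<iota>. (\<Sum>j\<in>J. c j * \<Phi> j \<psi>) = 0) \<longrightarrow> (\<forall>j. c j = 0)"
  shows "\<forall>c. (\<Sum>j\<in>J. c j *\<^sub>R Ainv_DAd A \<iota> (\<Phi> j)) = 0 \<longrightarrow> (\<forall>j. c j = 0)"
proof (rule allI, rule impI)
  fix c assume c: "(\<Sum>j\<in>J. c j *\<^sub>R Ainv_DAd A \<iota> (\<Phi> j)) = 0"
  have "(\<Sum>j\<in>J. c j * \<Phi> j \<psi>) = inner (\<Sum>j\<in>J. c j *\<^sub>R Ainv_DAd A \<iota> (\<Phi> j)) (AH A \<iota> \<psi>)"
    if "\<psi> \<in> domA A \<iota>" for \<psi>
    using that assms(1) by (simp add: inner_sum_left inner_Ainv_DAd_AH)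
  then show "\<forall>j. c j = 0" using assms(2) c by simp
qed

lemma sol_V_imp_sol_Vd_A:
  assumes \<Phi>: "\<forall>j. in_DAdual A \<iota> (\<Phi> j)"
    and sol: "sol_V A \<iota> (ArcA A \<iota> Arc) (\<lambda>j. Ainv_DAd A \<iota> (\<Phi> j)) a b u w0 w"
  shows "sol_Vd A \<iota> Arc \<Phi> a b u (A w0) (\<lambda>t. A (w t))"
proof -
  from sol have cont: "continuous_on {a..b} w" and init: "w a = w0"
    and dom: "AE t in lebesgue_on {a<..<b}. w t \<in> domA A \<iota>"
    and meas: "(\<lambda>t. AH A \<iota> (w t)) \<in> borel_measurable (lebesgue_on {a<..<b})"
    and L2: "integrable (lebesgue_on {a<..<b}) (\<lambda>t. (norm (AH A \<iota> (w t)))\<^sup>2)"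
    and weak: "\<And>\<psi> t. t \<in> {a..b} \<Longrightarrow>
        set_integrable lebesgue {a..t} (\<lambda>s. - inner (AH A \<iota> (w s)) \<psi> - inner (\<iota> (ArcA A \<iota> Arc s (w s))) \<psi>
                       + (\<Sum>j\<in>UNIV. u s $ j * inner (Ainv_DAd A \<iota> (\<Phi> j)) \<psi>))
        \<and> inner (\<iota> (w t)) \<psi> - inner (\<iota> (w a)) \<psi> = (LINT s:{a..t}|lebesgue. - inner (AH A \<iota> (w s)) \<psi>
            - inner (\<iota> (ArcA A \<iota> Arc s (w s))) \<psi> + (\<Sum>j\<in>UNIV. u s $ j * inner (Ainv_DAd A \<iota> (\<Phi> j)) \<psi>))"
    unfolding sol_V_def Let_def by blast+
  show ?thesis
    unfolding sol_Vd_def Let_def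
  proof (intro conjI exI[of _ "\<lambda>t. AH A \<iota> (w t)"] ballI)
    show "continuous_on {a..b} (\<lambda>t. A (w t))"
      by (rule bounded_linear.continuous_on[OF bounded_linear_A cont])
    show "AE t in lebesgue_on {a<..<b}. A (w t) = embH \<iota> (AH A \<iota> (w t))"
      using dom by eventually_elim (rule A_eq_embH_AH)
    fix \<psi> t assume \<psi>: "\<psi> \<in> domA A \<iota>" and t: "t \<in> {a..b}"
    \<comment> \<open>the V-equation tested against A\<psi> \<in> H is the V'-equation for A w tested against \<psi>\<close>
    have "inner (\<iota> x) (AH A \<iota> \<psi>) = blinfun_apply (A x) \<psi>" for x
      using inner_AH[OF \<psi>] by (simp add: A_apply inner_commute)
    then show "set_integrable lebesgue {a..t} (\<lambda>s. - inner (AH A \<iota> (w s)) (AH A \<iota> \<psi>)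
          - blinfun_apply (blinfun_apply (Arc s) (AH A \<iota> (w s))) \<psi> + (\<Sum>j\<in>UNIV. u s $ j * \<Phi> j \<psi>))"
      and "blinfun_apply (A (w t)) \<psi> - blinfun_apply (A (w a)) \<psi> = (LINT s:{a..t}|lebesgue.
          - inner (AH A \<iota> (w s)) (AH A \<iota> \<psi>) - blinfun_apply (blinfun_apply (Arc s) (AH A \<iota> (w s))) \<psi>
          + (\<Sum>j\<in>UNIV. u s $ j * \<Phi> j \<psi>))"
      using weak[OF t, of "AH A \<iota> \<psi>"] by (simp_all add: ArcA_def inner_Ainv_DAd_AH[OF _ \<psi>] \<Phi>)
  qed (use init meas L2 in simp_all)
qed

end

theorem corollary3p3:
  fixes \<iota> :: "'v::{real_inner,complete_space} \<Rightarrow> 'h::{real_inner,complete_space}"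
    and A :: "'v \<Rightarrow> ('v \<Rightarrow>\<^sub>L real)"
    and Arc :: "real \<Rightarrow> ('h \<Rightarrow>\<^sub>L ('v \<Rightarrow>\<^sub>L real))"
    and \<Phi> :: "'m::finite \<Rightarrow> 'v \<Rightarrow> real"
    and v :: "nat \<Rightarrow> ('v \<Rightarrow>\<^sub>L real) \<Rightarrow> real \<Rightarrow> real^'m"
    and T \<theta> K :: real
  assumes sepV: "\<exists>D::'v set. countable D \<and> closure D = UNIV"
    and sepH: "\<exists>D::'h set. countable D \<and> closure D = UNIV"
    and A_def: "\<forall>y z. blinfun_apply (A y) z = inner y z"
    and emb_cont: "bounded_linear \<iota>" and emb_inj: "inj \<iota>"
    and emb_dense: "closure (range \<iota>) = UNIV" and emb_compact: "compact_emb \<iota>"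
    and Arc_meas: "Arc \<in> borel_measurable (lebesgue_on {0<..})"
    and Arc_bdd: "\<exists>C. AE t in lebesgue_on {0<..}. norm (Arc t) \<le> C"
    and T_pos: "T > 0" and theta: "0 < \<theta>" "\<theta> < 1"
    and Phi_DAd: "\<forall>j. in_DAdual A \<iota> (\<Phi> j)"
    and Phi_norm: "\<forall>j. DAdual_norm A \<iota> (\<Phi> j) = 1"
    and Phi_indep: "\<forall>c. (\<forall>\<psi> \<in> domA A \<iota>. (\<Sum>j\<in>UNIV. c j * \<Phi> j \<psi>) = 0) \<longrightarrow> (\<forall>j. c j = 0)"
    and v_lin: "\<forall>k. Linf_blin (Ik T k) (v k)"
    and v_bdd: "\<forall>k. Linf_opnorm_le (Ik T k) (v k) K"
    and stab: "\<forall>k f y. sol_Vd A \<iota> Arc \<Phi> (real k * T) (real k * T + T) (v k f) f y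
                 \<longrightarrow> norm (y (real k * T + T)) \<le> \<theta> * norm f"
  shows "((\<forall>c. (\<Sum>j\<in>UNIV. c j *\<^sub>R Ainv_DAd A \<iota> (\<Phi> j)) = 0 \<longrightarrow> (\<forall>j. c j = 0))
           \<and> (\<forall>j. norm (Ainv_DAd A \<iota> (\<Phi> j)) = 1))
         \<and> (\<forall>k. Linf_blin (Ik T k) (\<lambda>w. v k (A w)) \<and> Linf_opnorm_le (Ik T k) (\<lambda>w. v k (A w)) K)
         \<and> (\<forall>k w0 w. sol_V A \<iota> (ArcA A \<iota> Arc) (\<lambda>j. Ainv_DAd A \<iota> (\<Phi> j)) (real k * T) (real k * T + T)
                   (v k (A w0)) w0 w
                 \<longrightarrow> norm (w (real k * T + T)) \<le> \<theta> * norm w0)"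
proof -
  interpret gelfand_triple \<iota> A
    using A_def emb_cont emb_dense by (simp add: gelfand_triple_def)
  have "\<forall>k w0 w. sol_V A \<iota> (ArcA A \<iota> Arc) (\<lambda>j. Ainv_DAd A \<iota> (\<Phi> j)) (real k * T) (real k * T + T)
                   (v k (A w0)) w0 w
                 \<longrightarrow> norm (w (real k * T + T)) \<le> \<theta> * norm w0"
  proof (intro allI impI)
    fix k w0 w
    assume "sol_V A \<iota> (ArcA A \<iota> Arc) (\<lambda>j. Ainv_DAd A \<iota> (\<Phi> j)) (real k * T) (real k * T + T)
        (v k (A w0)) w0 w"
    then have "sol_Vd A \<iota> Arc \<Phi> (real k * T) (real k * T + T) (v k (A w0)) (A w0) (\<lambda>t. A (w t))"
      using Phi_DAd by (rule sol_V_imp_sol_Vd_A[rotated])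
    then show "norm (w (real k * T + T)) \<le> \<theta> * norm w0"
      using stab by fastforce
  qed
  moreover have "\<forall>j. norm (Ainv_DAd A \<iota> (\<Phi> j)) = 1"
    using Phi_DAd Phi_norm norm_Ainv_DAd by simp
  ultimately show ?thesis
    using Ainv_DAd_linear_independent[OF Phi_DAd Phi_indep] v_lin v_bdd
      Linf_blin_compose_isometry[OF linear_A norm_A] Linf_opnorm_le_compose_isometry[OF norm_A]
    by blast
qed

end
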